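(* Let $\langle Y,\tau\rangle$ be a Hausdorff space with a Sorgenfrey base. Then there exists a continuous open surjection $f:\langle{}^\omega\omega,\sigma_{\mathbb S}\rangle\to\langle Y,\tau\rangle$. Moreover, if $\langle Y,\tau\rangle$ has a Sorgenfrey base that is locally strict and has strict branches, then $\langle Y,\tau\rangle$ is homeomorphic to $\langle{}^\omega\omega,\sigma_{\mathbb S}\rangle$.
   Context: Notation: ${}^{<\omega}\omega$, ${}^\omega\omega$ finite/infinite sequences of naturals; $a^\frown k$ extends $a$ by $k$; $a\triangleleft b$ iff there is $n$ in both domains with $a\upharpoonright n=b\upharpoonright n$ and $a(n)<b(n)$. $\sigma_{\mathbb S}$ is the topology on ${}^\omega\omega$ with base $\{B(p,m):p\in{}^\omega\omega,m\in\omega\}$, $B(p,m)=\{p\}\cup\{r: r\upharpoonright m=p\upharpoonright m,\ p\triangleleft r\}$. A Souslin scheme on $X$ is a family $\mathbf V=\langle V_a\rangle_{a\in{}^{<\omega}\omega}$ of subsets of $X$; $\mathrm{fruit}(\mathbf V,p)=\bigcap_nV_{p\upharpoonright n}$; covering: $V_{\langle\rangle}=X$ and $V_a=\bigcup_nV_{a^\frown n}$; complete: all fruits nonempty; open: all $V_a$ open; has strict branches: every fruit is a singleton; locally strict: $V_a=\bigcup_nV_{a^\frown n}$ and $V_{a^\frown m}\cap V_{a^\frown k}=\emptyset$ for all $a$ and $m\ne k$. $\mathrm{branches}(\mathbf V,x)=\{q: x\in\mathrm{fruit}(\mathbf V,q)\}$; $\mathrm{rsequences}(q,n)=\{p:q\triangleleft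 p,\ q\upharpoonright n=p\upharpoonright n\}$; $\mathrm{cut}(\mathbf V,q,n)=\bigcup\{\mathrm{fruit}(\mathbf V,p):p\in\mathrm{rsequences}(q,n)\}$. A branch $q$ of $x$ is a $\tau$-base branch of $x$ if $\{\mathrm{cut}(\mathbf V,q,m)\cup\{x\}:m\in\omega\}$ is an open neighborhood base at $x$; $\mathrm{BB}(\mathbf V,x,\tau)$ is the set of these. A Sorgenfrey base for a Hausdorff $\langle X,\tau\rangle$ is an open complete covering Souslin scheme with (S1) for all $x$, $q\in\mathrm{branches}(\mathbf V,x)$, $n$, some $t\in\mathrm{BB}(\mathbf V,x,\tau)$ has $t\upharpoonright n=q\upharpoonright n$; (S2) every $q\in{}^\omega\omega$ lies in $\mathrm{BB}(\mathbf V,z,\tau)$ for some $z$. *)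

theory Defs
  imports "HOL-Analysis.Analysis"
begin

definition restr :: "(nat \<Rightarrow> nat) \<Rightarrow> nat \<Rightarrow> nat list" where
  "restr p n = map p [0..<n]"

definition seq_less :: "(nat \<Rightarrow> nat) \<Rightarrow> (nat \<Rightarrow> nat) \<Rightarrow> bool" where
  "seq_less a b \<longleftrightarrow> (\<exists>n. (\<forall>i<n. a i = b i) \<and> a n < b n)"

definition SBall :: "(nat \<Rightarrow> nat) \<Rightarrow> nat \<Rightarrow> (nat \<Rightarrow> nat) set" where
  "SBall p m = {p} \<union> {r. (\<forall>i<m. r i = p i) \<and> seq_less p r}"

definition sigmaS :: "(nat \<Rightarrow> nat) topology" where
  "sigmaS = topology_generated_by (range (\<lambda>(p, m). SBall p m))"

type_synonym 'a souslin = "nat list \<Rightarrow> 'a set"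

definition souslin_scheme :: "'a topology \<Rightarrow> 'a souslin \<Rightarrow> bool" where
  "souslin_scheme X V \<longleftrightarrow> (\<forall>a. V a \<subseteq> topspace X)"

definition fruit :: "'a souslin \<Rightarrow> (nat \<Rightarrow> nat) \<Rightarrow> 'a set" where
  "fruit V p = (\<Inter>n. V (restr p n))"

definition covering :: "'a topology \<Rightarrow> 'a souslin \<Rightarrow> bool" where
  "covering X V \<longleftrightarrow> V [] = topspace X \<and> (\<forall>a. V a = (\<Union>n. V (a @ [n])))"

definition complete_scheme :: "'a souslin \<Rightarrow> bool" where
  "complete_scheme V \<longleftrightarrow> (\<forall>p. fruit V p \<noteq> {})"

definition open_scheme :: "'a topology \<Rightarrow> 'a souslin \<Rightarrow> bool" where
  "open_scheme X V \<longleftrightarrow> (\<forall>a. openin X (V a))"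

definition strict_branches :: "'a souslin \<Rightarrow> bool" where
  "strict_branches V \<longleftrightarrow> (\<forall>p. \<exists>x. fruit V p = {x})"

definition locally_strict :: "'a souslin \<Rightarrow> bool" where
  "locally_strict V \<longleftrightarrow> (\<forall>a. V a = (\<Union>n. V (a @ [n])) \<and>
      (\<forall>m k. m \<noteq> k \<longrightarrow> V (a @ [m]) \<inter> V (a @ [k]) = {}))"

definition branches :: "'a souslin \<Rightarrow> 'a \<Rightarrow> (nat \<Rightarrow> nat) set" where
  "branches V x = {q. x \<in> fruit V q}"

definition rsequences :: "(nat \<Rightarrow> nat) \<Rightarrow> nat \<Rightarrow> (nat \<Rightarrow> nat) set" where
  "rsequences q n = {p. seq_less q p \<and> restr q n = restr p n}"

definition cut :: "'a souslin \<Rightarrow> (nat \<Rightarrow> nat) \<Rightarrow> nat \<Rightarrow> 'a set" where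
  "cut V q n = \<Union> {fruit V p | p. p \<in> rsequences q n}"

definition base_branches :: "'a souslin \<Rightarrow> 'a \<Rightarrow> 'a topology \<Rightarrow> (nat \<Rightarrow> nat) set" where
  "base_branches V x T = {q. q \<in> branches V x \<and>
      (\<forall>m. openin T (cut V q m \<union> {x})) \<and>
      (\<forall>U. openin T U \<and> x \<in> U \<longrightarrow> (\<exists>m. cut V q m \<union> {x} \<subseteq> U))}"

definition sorgenfrey_base :: "'a topology \<Rightarrow> 'a souslin \<Rightarrow> bool" where
  "sorgenfrey_base T V \<longleftrightarrow> souslin_scheme T V \<and> open_scheme T V \<and> complete_scheme V \<and>
     covering T V \<and>
     (\<forall>x\<in>topspace T. \<forall>q\<in>branches V x. \<forall>n. \<exists>t\<in>base_branches V x T. restr t n = restr q n) \<and>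
     (\<forall>q. \<exists>z\<in>topspace T. q \<in> base_branches V z T)"

end

theory Submission imports Defs begin

text \<open>Every q is a base branch of exactly one point f q: the cuts of q are nonempty by
completeness and shrink to any neighbourhood of a point having q as base branch, so Hausdorffness
leaves room for one such point only. The map f sends the basic ball B(q,m) onto
cut(V,q,m) \<union> {f q}: a point y of the cut lies on a branch p \<rhd> q, and (S1) supplies a base branch
t of y agreeing with p long enough to satisfy t \<rhd> q as well. These images form a neighbourhood
base at f q, so f is continuous and open, and surjective because (S1) gives every point a base
branch. If V is locally strict, distinct branches have disjoint fruits, so f is injective and
hence a homeomorphism.\<close>

lemma restr_eq_iff: "restr p n = restr q n \<longleftrightarrow> (\<forall>i<n. p i = q i)"
  unfolding restr_def by (auto simp: map_eq_conv)

lemma restr_Suc: "restr p (Suc n) = restr p n @ [p n]"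
  by (simp add: restr_def)

lemma rsequences_iff: "p \<in> rsequences q m \<longleftrightarrow> seq_less q p \<and> (\<forall>i<m. p i = q i)"
  unfolding rsequences_def restr_eq_iff by auto

lemma rsequences_antimono: "m \<le> k \<Longrightarrow> rsequences q k \<subseteq> rsequences q m"
  by (auto simp: rsequences_iff)

lemma rsequences_agreeing:
  assumes "p \<in> rsequences q m"
  obtains d where "\<And>t. (\<forall>i\<le>d. t i = p i) \<Longrightarrow> t \<in> rsequences q m"
proof -
  obtain d where d: "\<forall>i<d. q i = p i" "q d < p d" and pq: "\<forall>i<m. p i = q i"
    using assms unfolding rsequences_iff seq_less_def by auto
  have "m \<le> d"
    using d(2) pq by (metis leI less_irrefl)
  have "t \<in> rsequences q m" if t: "\<forall>i\<le>d. t i = p i" for t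
  proof -
    have "seq_less q t"
      unfolding seq_less_def using t d by (intro exI[of _ d]) auto
    moreover have "\<forall>i<m. t i = q i"
      using t pq \<open>m \<le> d\<close> by auto
    ultimately show ?thesis
      unfolding rsequences_iff by blast
  qed
  then show thesis using that by blast
qed

lemma SBall_eq_insert_rsequences: "SBall q m = insert q (rsequences q m)"
  unfolding SBall_def by (auto simp: rsequences_iff)

lemma SBall_self: "q \<in> SBall q m"
  unfolding SBall_def by auto

lemma SBall_antimono: "m \<le> k \<Longrightarrow> SBall q k \<subseteq> SBall q m"
  unfolding SBall_eq_insert_rsequences using rsequences_antimono by blast

lemma SBall_contains_SBall:
  assumes "w \<in> SBall q m" shows "\<exists>k. SBall w k \<subseteq> SBall q m"
proof (cases "w = q")
  case False
  then obtain d where d: "\<And>t. (\<forall>i\<le>d. t i = w i) \<Longrightarrow> t \<in> rsequences q m"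
    using assms rsequences_agreeing unfolding SBall_eq_insert_rsequences by blast
  have "SBall w (Suc d) \<subseteq> SBall q m"
  proof
    fix t assume "t \<in> SBall w (Suc d)"
    then have "\<forall>i\<le>d. t i = w i"
      by (auto simp: SBall_eq_insert_rsequences rsequences_iff)
    then show "t \<in> SBall q m"
      unfolding SBall_eq_insert_rsequences using d by blast
  qed
  then show ?thesis by blast
qed blast

lemma openin_sigmaS: "openin sigmaS W \<longleftrightarrow> (\<forall>w\<in>W. \<exists>m. SBall w m \<subseteq> W)"
proof
  assume "openin sigmaS W"
  then have "generate_topology_on (range (\<lambda>(p, m). SBall p m)) W"
    unfolding sigmaS_def openin_topology_generated_by_iff .
  then show "\<forall>w\<in>W. \<exists>m. SBall w m \<subseteq> W"
  proof induction
    case (Int a b)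
    show ?case
    proof
      fix w assume "w \<in> a \<inter> b"
      then obtain m1 m2 where "SBall w m1 \<subseteq> a" "SBall w m2 \<subseteq> b"
        using Int by blast
      then have "SBall w (max m1 m2) \<subseteq> a \<inter> b"
        using SBall_antimono[of m1 "max m1 m2" w] SBall_antimono[of m2 "max m1 m2" w] by auto
      then show "\<exists>m. SBall w m \<subseteq> a \<inter> b" by blast
    qed
  next
    case (UN K)
    then show ?case by blast
  qed (use SBall_contains_SBall in auto)
next
  assume "\<forall>w\<in>W. \<exists>m. SBall w m \<subseteq> W"
  then obtain m where m: "\<And>w. w \<in> W \<Longrightarrow> SBall w (m w) \<subseteq> W" by metis
  have "W = (\<Union>w\<in>W. SBall w (m w))"
    using m SBall_self by blast
  moreover have "generate_topology_on (range (\<lambda>(p, m). SBall p m)) (\<Union>w\<in>W. SBall w (m w))"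
    by (intro generate_topology_on.UN) (auto intro: generate_topology_on.Basis)
  ultimately show "openin sigmaS W"
    unfolding sigmaS_def openin_topology_generated_by_iff by simp
qed

lemma topspace_sigmaS: "topspace sigmaS = UNIV"
  using openin_subset[of sigmaS UNIV] unfolding openin_sigmaS by blast

lemma cut_antimono: "m \<le> k \<Longrightarrow> cut V q k \<subseteq> cut V q m"
  unfolding cut_def using rsequences_antimono by blast

lemma cut_nonempty:
  assumes "complete_scheme V" shows "cut V q m \<noteq> {}"
proof -
  have "q(m := Suc (q m)) \<in> rsequences q m"
    unfolding rsequences_iff seq_less_def by auto
  then show ?thesis
    using assms unfolding cut_def complete_scheme_def by blast
qed

lemma covering_root: "covering X V \<Longrightarrow> V [] = topspace X"
  and covering_children: "covering X V \<Longrightarrow> V a = (\<Union>n. V (a @ [n]))"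
  unfolding covering_def by blast+

lemma covering_fruit_subset_topspace:
  assumes "covering X V" shows "fruit V p \<subseteq> topspace X"
proof -
  have "fruit V p \<subseteq> V (restr p 0)"
    unfolding fruit_def by blast
  then show ?thesis
    using covering_root[OF assms] by (simp add: restr_def)
qed

lemma covering_branch_exists:
  assumes cov: "covering X V" and y: "y \<in> topspace X"
  obtains q where "q \<in> branches V y"
proof -
  define g where "g a = (SOME k. y \<in> V (a @ [k]))" for a
  have g: "y \<in> V (a @ [g a])" if "y \<in> V a" for a
  proof -
    have "\<exists>k. y \<in> V (a @ [k])"
      using that covering_children[OF cov, of a] by blast
    then show ?thesis
      unfolding g_def by (rule someI_ex)
  qed
  define prefix where "prefix n = rec_nat [] (\<lambda>_ a. a @ [g a]) n" for n
  have prefix_0: "prefix 0 = []" and prefix_Suc: "prefix (Suc n) = prefix n @ [g (prefix n)]" for n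
    unfolding prefix_def by simp_all
  define q where "q n = g (prefix n)" for n
  have restr_q: "restr q n = prefix n" for n
    by (induction n) (simp_all add: restr_def prefix_0 prefix_Suc q_def)
  have "y \<in> V (prefix n)" for n
    by (induction n) (simp_all add: prefix_0 prefix_Suc g covering_root[OF cov] y)
  then have "q \<in> branches V y"
    unfolding branches_def fruit_def by (simp add: restr_q)
  then show thesis by (rule that)
qed

lemma locally_strict_children_disjoint:
  assumes "locally_strict V" and "m \<noteq> k"
  shows "V (a @ [m]) \<inter> V (a @ [k]) = {}"
proof -
  have "V a = (\<Union>n. V (a @ [n])) \<and> (\<forall>m k. m \<noteq> k \<longrightarrow> V (a @ [m]) \<inter> V (a @ [k]) = {})"
    using assms(1) unfolding locally_strict_def by (rule spec)
  then have "\<forall>m k. m \<noteq> k \<longrightarrow> V (a @ [m]) \<inter> V (a @ [k]) = {}"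
    by (rule conjunct2)
  then show ?thesis
    using assms(2) by blast
qed

lemma locally_strict_fruits_disjoint:
  assumes ls: "locally_strict V" and "p \<noteq> q"
  shows "fruit V p \<inter> fruit V q = {}"
proof -
  define n where "n = (LEAST d. p d \<noteq> q d)"
  obtain d where "p d \<noteq> q d"
    using \<open>p \<noteq> q\<close> by blast
  then have "p n \<noteq> q n"
    unfolding n_def by (rule LeastI)
  then have "V (restr p n @ [p n]) \<inter> V (restr p n @ [q n]) = {}"
    by (rule locally_strict_children_disjoint[OF ls])
  moreover have "restr q n = restr p n"
    unfolding n_def restr_eq_iff by (auto dest: not_less_Least)
  ultimately have "V (restr p (Suc n)) \<inter> V (restr q (Suc n)) = {}"
    by (simp add: restr_Suc)
  moreover have "fruit V p \<subseteq> V (restr p (Suc n))" "fruit V q \<subseteq> V (restr q (Suc n))"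
    unfolding fruit_def by blast+
  ultimately show ?thesis by blast
qed

locale hausdorff_sorgenfrey_base =
  fixes Y :: "'a topology" and V :: "'a souslin"
  assumes Hausdorff: "Hausdorff_space Y"
    and base: "sorgenfrey_base Y V"
begin

lemma complete: "complete_scheme V"
  and covers: "covering Y V"
  and base_branch_near:
    "\<lbrakk>x \<in> topspace Y; q \<in> branches V x\<rbrakk> \<Longrightarrow> \<exists>t\<in>base_branches V x Y. restr t n = restr q n"
  and base_branch_of_some_point: "\<exists>z\<in>topspace Y. q \<in> base_branches V z Y"
  using base unfolding sorgenfrey_base_def by blast+

lemma base_branch_point_unique:
  assumes "z \<in> topspace Y" "q \<in> base_branches V z Y"
    and "z' \<in> topspace Y" "q \<in> base_branches V z' Y"
  shows "z = z'"
proof (rule ccontr)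
  assume "z \<noteq> z'"
  then obtain U U' where U: "openin Y U" "openin Y U'" "z \<in> U" "z' \<in> U'" "disjnt U U'"
    using Hausdorff assms(1,3) unfolding Hausdorff_space_def by blast
  obtain m where "cut V q m \<union> {z} \<subseteq> U"
    using assms(2) U(1,3) unfolding base_branches_def by blast
  moreover obtain m' where "cut V q m' \<union> {z'} \<subseteq> U'"
    using assms(4) U(2,4) unfolding base_branches_def by blast
  ultimately have "cut V q m \<subseteq> U" "cut V q m' \<subseteq> U'"
    by auto
  then have "cut V q (max m m') \<subseteq> U \<inter> U'"
    using cut_antimono[of m "max m m'" V q] cut_antimono[of m' "max m m'" V q] by auto
  then show False
    using U(5) cut_nonempty[OF complete, of q "max m m'"] unfolding disjnt_def by blast
qed

definition point :: "(nat \<Rightarrow> nat) \<Rightarrow> 'a" where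
  "point q = (SOME z. z \<in> topspace Y \<and> q \<in> base_branches V z Y)"

lemma point_base_branch: "point q \<in> topspace Y" "q \<in> base_branches V (point q) Y"
  using someI_ex[OF base_branch_of_some_point[of q, unfolded Bex_def]]
  unfolding point_def by blast+

lemma point_in_fruit: "point q \<in> fruit V q"
  using point_base_branch(2) unfolding base_branches_def branches_def by blast

lemma point_eqI:
  assumes "z \<in> topspace Y" "q \<in> base_branches V z Y" shows "point q = z"
  using base_branch_point_unique[OF point_base_branch assms] .

lemma point_image_SBall_subset: "point ` SBall q m \<subseteq> insert (point q) (cut V q m)"
  unfolding SBall_eq_insert_rsequences cut_def using point_in_fruit by blast

lemma cut_subset_point_image_SBall: "cut V q m \<subseteq> point ` SBall q m"
proof
  fix y assume "y \<in> cut V q m"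
  then obtain p where p: "p \<in> rsequences q m" "y \<in> fruit V p"
    unfolding cut_def by blast
  obtain d where d: "\<And>t. (\<forall>i\<le>d. t i = p i) \<Longrightarrow> t \<in> rsequences q m"
    using rsequences_agreeing[OF p(1)] by blast
  have y: "y \<in> topspace Y"
    using p(2) covering_fruit_subset_topspace[OF covers] by blast
  obtain t where t: "t \<in> base_branches V y Y" "restr t (Suc d) = restr p (Suc d)"
    using base_branch_near[OF y] p(2) unfolding branches_def by blast
  have "t \<in> SBall q m"
    using t(2) d unfolding restr_eq_iff SBall_eq_insert_rsequences by auto
  moreover have "point t = y"
    using point_eqI[OF y t(1)] .
  ultimately show "y \<in> point ` SBall q m" by blast
qed

lemma point_image_SBall: "point ` SBall q m = insert (point q) (cut V q m)"
  using point_image_SBall_subset cut_subset_point_image_SBall SBall_self by blast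

lemma continuous_map_point: "continuous_map sigmaS Y point"
  unfolding continuous_map_def
proof (intro conjI allI impI)
  show "point \<in> topspace sigmaS \<rightarrow> topspace Y"
    using point_base_branch(1) by blast
  fix U assume U: "openin Y U"
  show "openin sigmaS {x \<in> topspace sigmaS. point x \<in> U}"
    unfolding openin_sigmaS
  proof
    fix w assume "w \<in> {x \<in> topspace sigmaS. point x \<in> U}"
    then obtain m where "cut V w m \<union> {point w} \<subseteq> U"
      using point_base_branch(2)[of w] U unfolding base_branches_def by blast
    then have "point ` SBall w m \<subseteq> U"
      unfolding point_image_SBall by simp
    then have "SBall w m \<subseteq> {x \<in> topspace sigmaS. point x \<in> U}"
      unfolding image_subset_iff topspace_sigmaS by blast
    then show "\<exists>m. SBall w m \<subseteq> {x \<in> topspace sigmaS. point x \<in> U}" by blast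
  qed
qed

lemma open_map_point: "open_map sigmaS Y point"
  unfolding open_map_def
proof (intro allI impI)
  fix W assume "openin sigmaS W"
  then obtain m where m: "\<And>w. w \<in> W \<Longrightarrow> SBall w (m w) \<subseteq> W"
    unfolding openin_sigmaS by metis
  have W: "point ` W = (\<Union>w\<in>W. point ` SBall w (m w))"
    using m SBall_self by blast
  have "openin Y (point ` SBall w (m w))" for w
    using point_base_branch(2)[of w] unfolding point_image_SBall base_branches_def by simp
  then show "openin Y (point ` W)"
    unfolding W by (intro openin_Union) blast
qed

lemma point_surjective: "point ` topspace sigmaS = topspace Y"
proof
  show "point ` topspace sigmaS \<subseteq> topspace Y"
    using point_base_branch(1) by blast
  show "topspace Y \<subseteq> point ` topspace sigmaS"
  proof
    fix y assume y: "y \<in> topspace Y"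
    obtain q where "q \<in> branches V y"
      using covering_branch_exists[OF covers y] .
    then obtain t where "t \<in> base_branches V y Y"
      using base_branch_near[OF y] by blast
    then have "point t = y"
      by (rule point_eqI[OF y])
    then show "y \<in> point ` topspace sigmaS"
      unfolding topspace_sigmaS by blast
  qed
qed

lemma point_injective:
  assumes "locally_strict V" shows "inj point"
proof (rule injI)
  fix p q assume "point p = point q"
  then have "point p \<in> fruit V p \<inter> fruit V q"
    using point_in_fruit[of p] point_in_fruit[of q] by simp
  then show "p = q"
    using locally_strict_fruits_disjoint[OF assms, of p q] by blast
qed

end

text \<open>Local strictness alone makes the map injective; strict branches are not needed.\<close>

theorem mainTheorem8:
  fixes Y :: "'a topology"
  assumes "Hausdorff_space Y"
    and "\<exists>V. sorgenfrey_base Y V"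
  shows "(\<exists>f. continuous_map sigmaS Y f \<and> open_map sigmaS Y f \<and> f ` topspace sigmaS = topspace Y)
    \<and> ((\<exists>V. sorgenfrey_base Y V \<and> locally_strict V \<and> strict_branches V)
         \<longrightarrow> sigmaS homeomorphic_space Y)"
proof (intro conjI impI)
  obtain V where "sorgenfrey_base Y V" using assms(2) by blast
  then interpret hausdorff_sorgenfrey_base Y V
    using assms(1) by unfold_locales
  show "\<exists>f. continuous_map sigmaS Y f \<and> open_map sigmaS Y f \<and> f ` topspace sigmaS = topspace Y"
    using continuous_map_point open_map_point point_surjective by blast
next
  assume "\<exists>V. sorgenfrey_base Y V \<and> locally_strict V \<and> strict_branches V"
  then obtain V where "sorgenfrey_base Y V" "locally_strict V" by blast
  then interpret hausdorff_sorgenfrey_base Y V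
    using assms(1) by unfold_locales
  have "inj_on point (topspace sigmaS)"
    using point_injective[OF \<open>locally_strict V\<close>] by (simp add: topspace_sigmaS)
  then have "homeomorphic_map sigmaS Y point"
    by (rule bijective_open_imp_homeomorphic_map[OF continuous_map_point open_map_point
          point_surjective])
  then show "sigmaS homeomorphic_space Y"
    unfolding homeomorphic_space by blast
qed

end
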